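(* Let $(C,\mathfrak p,\mathfrak d)$ be a regular $q$-cycle coalgebra with $\mathfrak p_{11}^1\ne0$. Then $\mathfrak d=\mathfrak p$, $\mathfrak p_{j0}^1=\delta_{j1}$ for all $j$, and $\mathfrak p$ depends only on $\mathfrak p_{1k}^1$, $k=1,\dots,n-1$, via the recursive formulas (all indices in $\{0,\dots,n-1\}$): $$\mathfrak p_{j1}^1\mathfrak p_{11}^1=\mathfrak p_{11}^1\sum_{a=0}^{j-1}\mathfrak p_{1a}^1\mathfrak p_{1,j-a}^1-\sum_{l=2}^{j}l\,\mathfrak p_{j-l+1,1}^1\mathfrak p_{1l}^1\quad\text{for }j>1;$$ $$(i+j-1)\mathfrak p_{11}^1\,\mathfrak p_{ij}^1=\sum_{\substack{a+b=j\\ 1\le h\le i\\ (a,h)\ne(j,1)}}\mathfrak p_{ia}^h\mathfrak p_{1b}^1\mathfrak p_{h1}^1-\sum_{\substack{c+d=1\\ 1\le h\le i\\ 1\le l\le j\\ (h,l)\ne(i,j)}}\mathfrak p_{ic}^h\mathfrak p_{jd}^l\mathfrak p_{hl}^1\quad\text{for }i,j>1;$$ $$\mathfrak p_{jk}^l=\sum_{\substack{j_1+j_2=j\\ k_1+k_2=k\\ j_1+k_1\ge1\\ j_2+k_2\ge l-1}}\mathfrak p_{j_1k_1}^1\mathfrak p_{j_2k_2}^{l-1}\quad\text{for }l>1.$$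
   Context: $K$ is an algebraically closed field of characteristic $0$ and $n\ge2$. $C$ is the coalgebra dual to $K[y]/\langle y^n\rangle$: basis $x_0,\dots,x_{n-1}$, $\Delta(x_i)=\sum_{j+k=i}x_j\otimes x_k$, $\epsilon(x_i)=\delta_{i0}$; $C\otimes C$ has the tensor product coalgebra structure; Sweedler notation $\Delta(b)=b_{(1)}\otimes b_{(2)}$. For linear maps $\mathfrak p,\mathfrak d\colon C\otimes C\to C$ write $a\cdot b=\mathfrak p(a\otimes b)$, $a:b=\mathfrak d(a\otimes b)$, $\mathfrak p(x_i\otimes x_j)=\sum_{k=0}^{n-1}\mathfrak p_{ij}^kx_k$, $\mathfrak d(x_i\otimes x_j)=\sum_{k=0}^{n-1}\mathfrak d_{ij}^kx_k$, with the convention $\mathfrak p_{ij}^k=\mathfrak d_{ij}^k=0$ if $k\ge n$, $i<0$ or $j<0$; sums over $a+b=j$, $c+d=1$ etc. range over nonnegative integers. A triple $(C,\mathfrak p,\mathfrak d)$ with $\mathfrak p,\mathfrak d$ coalgebra morphisms is a regular $q$-magma coalgebra if there are coalgebra morphisms $a\otimes b\mapsto a^b$, $a\otimes b\mapsto a_b$ from $C\otimes C$ to $C$ with $a^{b_{(1)}}\cdot b_{(2)}=(a\cdot b_{(1)})^{b_{(2)}}=\epsilon(b)a$ and $(a:b_{(2)})_{b_{(1)}}=a_{b_{(2)}}:b_{(1)}=\epsilon(b)a$. It is a regular $q$-cycle coalgebra if moreover for all $a,b,c$: (1) $(a\cdot b_{(1)})\cdot(c:b_{(2)})=(a\cdot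 c_{(2)})\cdot(b\cdot c_{(1)})$; (2) $(a\cdot b_{(1)}):(c\cdot b_{(2)})=(a:c_{(2)})\cdot(b:c_{(1)})$; (3) $(a:b_{(1)}):(c:b_{(2)})=(a:c_{(2)}):(b\cdot c_{(1)})$. *)

theory Defs
  imports "HOL-Computational_Algebra.Polynomial"
begin

text \<open>The coalgebra C has basis x_0,...,x_{n-1}.  A linear map C \<otimes> C \<rightarrow> C is
  encoded by its structure constants: M i j k is the coefficient of x_k in
  M(x_i \<otimes> x_j).\<close>

definition lin_coeffs :: "nat \<Rightarrow> (nat \<Rightarrow> nat \<Rightarrow> nat \<Rightarrow> 'a::field) \<Rightarrow> bool" where
  "lin_coeffs n M \<longleftrightarrow> (\<forall>i j k. (n \<le> i \<or> n \<le> j \<or> n \<le> k) \<longrightarrow> M i j k = 0)"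

definition alg_closed :: "'a::field itself \<Rightarrow> bool" where
  "alg_closed _ \<longleftrightarrow> (\<forall>q::'a poly. 1 \<le> degree q \<longrightarrow> (\<exists>x. poly q x = 0))"

definition bil :: "nat \<Rightarrow> (nat \<Rightarrow> nat \<Rightarrow> nat \<Rightarrow> 'a::field) \<Rightarrow> (nat \<Rightarrow> 'a) \<Rightarrow> (nat \<Rightarrow> 'a) \<Rightarrow> nat \<Rightarrow> 'a" where
  "bil n M u v k = (\<Sum>i<n. \<Sum>j<n. u i * v j * M i j k)"

text \<open>M : C \<otimes> C \<rightarrow> C is a coalgebra morphism (checked on the basis x_i \<otimes> x_j,
  where \<Delta>(x_i \<otimes> x_j) = \<Sum>_{a+b=i, c+d=j} (x_a \<otimes> x_c) \<otimes> (x_b \<otimes> x_d)).\<close>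
definition coalg_morph :: "nat \<Rightarrow> (nat \<Rightarrow> nat \<Rightarrow> nat \<Rightarrow> 'a::field) \<Rightarrow> bool" where
  "coalg_morph n M \<longleftrightarrow>
     (\<forall>i<n. \<forall>j<n. \<forall>k<n. \<forall>l<n.
        (if k + l < n then M i j (k + l) else 0) =
        (\<Sum>a\<le>i. \<Sum>c\<le>j. M a c k * M (i - a) (j - c) l)) \<and>
     (\<forall>i<n. \<forall>j<n. M i j 0 = (if i = 0 \<and> j = 0 then 1 else 0))"

text \<open>Regular q-magma coalgebra: there are coalgebra morphisms L (a \<otimes> b \<mapsto> a^b) and
  R (a \<otimes> b \<mapsto> a_b) with a^{b(1)}\<cdot>b(2) = (a\<cdot>b(1))^{b(2)} = \<epsilon>(b) a and
  (a:b(2))_{b(1)} = a_{b(2)}:b(1) = \<epsilon>(b) a; checked on a = x_i, b = x_j, where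
  \<Delta>(x_j) = \<Sum>_{s+t=j} x_s \<otimes> x_t.\<close>
definition regular_q_magma :: "nat \<Rightarrow> (nat \<Rightarrow> nat \<Rightarrow> nat \<Rightarrow> 'a::field) \<Rightarrow> (nat \<Rightarrow> nat \<Rightarrow> nat \<Rightarrow> 'a) \<Rightarrow> bool" where
  "regular_q_magma n p d \<longleftrightarrow>
     lin_coeffs n p \<and> lin_coeffs n d \<and> coalg_morph n p \<and> coalg_morph n d \<and>
     (\<exists>L R. lin_coeffs n L \<and> lin_coeffs n R \<and> coalg_morph n L \<and> coalg_morph n R \<and>
        (\<forall>i<n. \<forall>j<n. \<forall>k<n.
           (\<Sum>s\<le>j. \<Sum>r<n. L i s r * p r (j - s) k) = (if j = 0 \<and> k = i then 1 else 0) \<and>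
           (\<Sum>s\<le>j. \<Sum>r<n. p i s r * L r (j - s) k) = (if j = 0 \<and> k = i then 1 else 0) \<and>
           (\<Sum>s\<le>j. \<Sum>r<n. d i (j - s) r * R r s k) = (if j = 0 \<and> k = i then 1 else 0) \<and>
           (\<Sum>s\<le>j. \<Sum>r<n. R i (j - s) r * d r s k) = (if j = 0 \<and> k = i then 1 else 0)))"

text \<open>Regular q-cycle coalgebra: the three identities, checked on a = x_i, b = x_j, c = x_l
  (all three sides are trilinear in a, b, c).\<close>
definition regular_q_cycle :: "nat \<Rightarrow> (nat \<Rightarrow> nat \<Rightarrow> nat \<Rightarrow> 'a::field) \<Rightarrow> (nat \<Rightarrow> nat \<Rightarrow> nat \<Rightarrow> 'a) \<Rightarrow> bool" where
  "regular_q_cycle n p d \<longleftrightarrow>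
     regular_q_magma n p d \<and>
     (\<forall>i<n. \<forall>j<n. \<forall>l<n. \<forall>k<n.
        (\<Sum>s\<le>j. bil n p (p i s) (d l (j - s)) k) = (\<Sum>t\<le>l. bil n p (p i (l - t)) (p j t) k) \<and>
        (\<Sum>s\<le>j. bil n d (p i s) (p l (j - s)) k) = (\<Sum>t\<le>l. bil n p (d i (l - t)) (d j t) k) \<and>
        (\<Sum>s\<le>j. bil n d (d i s) (d l (j - s)) k) = (\<Sum>t\<le>l. bil n d (d i (l - t)) (p j t) k))"

end

(* Dualising, p and d become algebra maps K[y]/(y^n) -> K[u,v]/(u^n,v^n), determined by
   f = p(y) and g = d(y). Regularity makes the coefficients of u in f and g invertible. In
   characteristic 0 this forces f(0,v) = g(0,v) = 0: if b v^m were the lowest pure power of v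
   in f = a u + ..., the coefficient of u^(n-1) v^m in f^n = 0 would be n a^(n-1) b. Identity (1)
   with an argument x_0 then yields f(u,0) = g(u,0) = u. Comparing the x_1-coefficients of
   identities (2) and (1) at (x_i, x_1, x_l) expresses (i+l-1) p_11^1 (d_il^1 - p_il^1) through
   such differences of lower total degree and, for i = 1, through d_l1^1 - p_l1^1; so d = p in
   degree 1 by induction on i + l (treating first indices i > 1 first), hence d = p. The recursions are then the
   x_1-coefficient of identity (1) and the relation f^l = f f^(l-1). *)

theory Submission
  imports Defs
begin

lemma sum_eq_single:
  assumes "finite A" "x0 \<in> A" "\<And>x. x \<in> A \<Longrightarrow> x \<noteq> x0 \<Longrightarrow> f x = 0"
  shows "sum f A = f x0"
proof -
  have "sum f A = f x0 + sum f (A - {x0})" using assms by (simp add: sum.remove)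
  also have "sum f (A - {x0}) = 0" using assms by (intro sum.neutral) auto
  finally show ?thesis by simp
qed

lemma sum_atMost_1: "(\<Sum>c\<le>(1::nat). g c) = g 0 + g 1"
  by (simp add: atMost_Suc add.commute)

lemma sum_sum_eq_sum_support:
  assumes "finite A" "finite B" "S \<subseteq> A \<times> B"
    "\<And>x y. x \<in> A \<Longrightarrow> y \<in> B \<Longrightarrow> (x, y) \<notin> S \<Longrightarrow> F x y = 0"
  shows "(\<Sum>x\<in>A. \<Sum>y\<in>B. F x y) = (\<Sum>(x, y)\<in>S. F x y)"
  unfolding sum.cartesian_product using assms by (intro sum.mono_neutral_right) auto

lemma sum_except_term:
  assumes "finite A" "x0 \<in> A"
  shows "(\<Sum>x\<in>A. if x = x0 then 0 else f x) = sum f A - (f x0 :: 'b::ab_group_add)"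
proof -
  have "(\<Sum>x\<in>A. if x = x0 then 0 else f x) = sum f (A - {x0})"
    using assms by (simp add: sum.delta_remove)
  then show ?thesis using assms by (simp add: sum_diff1)
qed

lemma sum_sum_except_term:
  assumes "finite A" "finite B" "a0 \<in> A" "b0 \<in> B"
  shows "(\<Sum>a\<in>A. \<Sum>b\<in>B. if (a, b) = (a0, b0) then 0 else F a b) =
    (\<Sum>a\<in>A. \<Sum>b\<in>B. F a b) - (F a0 b0 :: 'c::ab_group_add)"
proof -
  have eq: "(\<lambda>x. if x = (a0, b0) then 0 else case_prod F x) =
      (\<lambda>(a, b). if (a, b) = (a0, b0) then 0 else F a b)" by auto
  show ?thesis
    using sum_except_term[of "A \<times> B" "(a0, b0)" "case_prod F"] assms
    unfolding eq sum.cartesian_product by (simp only: prod.case mem_Sigma_iff finite_SigmaI)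
qed

lemma bil_single_left:
  assumes "r0 < n" "\<And>r. r < n \<Longrightarrow> r \<noteq> r0 \<Longrightarrow> u r = 0"
  shows "bil n M u v k = u r0 * (\<Sum>r<n. v r * M r0 r k)"
proof -
  have "bil n M u v k = (\<Sum>r<n. u r0 * v r * M r0 r k)"
    unfolding bil_def by (rule sum_eq_single) (use assms in auto)
  then show ?thesis by (simp add: sum_distrib_left mult.assoc)
qed

lemma bil_single_right:
  assumes "r0 < n" "\<And>r. r < n \<Longrightarrow> r \<noteq> r0 \<Longrightarrow> v r = 0"
  shows "bil n M u v k = v r0 * (\<Sum>r<n. u r * M r r0 k)"
proof -
  have "bil n M u v k = (\<Sum>r<n. u r * v r0 * M r r0 k)"
    unfolding bil_def by (intro sum.cong refl sum_eq_single) (use assms in auto)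
  then show ?thesis by (simp add: sum_distrib_left algebra_simps)
qed

text \<open>A coalgebra morphism \<open>C \<otimes> C \<rightarrow> C\<close> is dual to the algebra map
  \<open>K[y]/(y\<^sup>n) \<rightarrow> K[u,v]/(u\<^sup>n,v\<^sup>n)\<close> sending \<open>y\<close> to
  \<open>f = \<Sum> M i j 1 u\<^sup>i v\<^sup>j\<close>; then \<open>M i j k\<close> is the coefficient of \<open>u\<^sup>i v\<^sup>j\<close> in \<open>f\<^sup>k\<close>.\<close>

locale coalg_map =
  fixes n :: nat and M :: "nat \<Rightarrow> nat \<Rightarrow> nat \<Rightarrow> 'a::field"
  assumes lin: "lin_coeffs n M" and morph: "coalg_morph n M" and two_le_n: "2 \<le> n"
begin

lemma coeff_eq_0_outside: "n \<le> i \<or> n \<le> j \<or> n \<le> k \<Longrightarrow> M i j k = 0"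
  using lin unfolding lin_coeffs_def by blast

lemma coeff_degree_0: "M i j 0 = (if i = 0 \<and> j = 0 then 1 else 0)"
proof (cases "i < n \<and> j < n")
  case True then show ?thesis using morph unfolding coalg_morph_def by blast
next
  case False then show ?thesis using coeff_eq_0_outside[of i j 0] two_le_n by auto
qed

lemma coeff_add:
  assumes "i < n" "j < n" "k < n" "l < n"
  shows "(if k + l < n then M i j (k + l) else 0) = (\<Sum>a\<le>i. \<Sum>c\<le>j. M a c k * M (i - a) (j - c) l)"
  using morph assms unfolding coalg_morph_def by blast

lemma coeff_Suc:
  assumes "i < n" "j < n" "Suc k < n"
  shows "M i j (Suc k) = (\<Sum>a\<le>i. \<Sum>c\<le>j. M a c 1 * M (i - a) (j - c) k)"
  using coeff_add[of i j 1 k] assms by simp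

text \<open>Give \<open>u\<close> weight \<open>1\<close> and \<open>v\<close> weight \<open>1/m\<close>: if \<open>f\<close> contains no
  \<open>v\<^sup>c\<close> with \<open>c < m\<close>, then all monomials of \<open>f\<close> have weight at least \<open>1\<close>, so all
  monomials of \<open>f\<^sup>k\<close> have weight at least \<open>k\<close>.\<close>

lemma coeff_eq_0_below_weight:
  assumes pure_below: "\<And>c. c < m \<Longrightarrow> M 0 c 1 = 0"
  shows "i < k \<Longrightarrow> j < m * (k - i) \<Longrightarrow> M i j k = 0"
proof (induction k arbitrary: i j)
  case (Suc k)
  show ?case
  proof (cases "i < n \<and> j < n \<and> Suc k < n")
    case True
    have "(\<Sum>a\<le>i. \<Sum>c\<le>j. M a c 1 * M (i - a) (j - c) k) = 0"
    proof (intro sum.neutral ballI)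
      fix a c assume a: "a \<in> {..i}" and c: "c \<in> {..j}"
      show "M a c 1 * M (i - a) (j - c) k = 0"
      proof (cases "a = 0")
        case a0: True
        show ?thesis
        proof (cases "c < m")
          case True then show ?thesis using pure_below a0 by simp
        next
          case False
          then have ik: "i < k" using Suc.prems c by (cases "i = k") auto
          then have "m * (Suc k - i) = m * (k - i) + m" by (simp add: Suc_diff_le)
          then have "j - c < m * (k - i)" using Suc.prems(2) False c by auto
          then show ?thesis using Suc.IH[OF ik] a0 by simp
        qed
      next
        case False
        then have ik: "i - a < k" using a Suc.prems by auto
        have "Suc k - i \<le> k - (i - a)" using False a Suc.prems by auto
        then have "m * (Suc k - i) \<le> m * (k - (i - a))" by simp
        then have "j - c < m * (k - (i - a))" using Suc.prems(2) by linarith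
        then show ?thesis using Suc.IH[OF ik] by simp
      qed
    qed
    then show ?thesis using True coeff_Suc[of i j k] by simp
  next
    case False then show ?thesis using coeff_eq_0_outside by auto
  qed
qed simp

lemma no_constant_term: "M 0 0 1 = 0"
proof -
  let ?x = "M 0 0 1"
  have pow: "M 0 0 k = ?x ^ k" if "k < n" for k
    using that
  proof (induction k)
    case (Suc k)
    have "M 0 0 (Suc k) = ?x * M 0 0 k" using coeff_Suc[of 0 0 k] Suc.prems by simp
    then show ?case using Suc by simp
  qed (simp add: coeff_degree_0)
  have "0 = (\<Sum>a\<le>0. \<Sum>c\<le>0. M a c 1 * M (0 - a) (0 - c) (n - 1))"
    using coeff_add[of 0 0 1 "n - 1"] two_le_n by simp
  also have "\<dots> = ?x ^ n" using pow[of "n - 1"] two_le_n by (simp add: power_eq_if)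
  finally show ?thesis by simp
qed

lemma coeff_eq_0_if_total_less: "i + j < k \<Longrightarrow> M i j k = 0"
  using coeff_eq_0_below_weight[of 1 i k j] no_constant_term by simp

lemma sum_row_1_0: "(\<Sum>r<n. M 1 0 r * X r) = M 1 0 1 * X 1"
proof (rule sum_eq_single)
  fix r assume "r \<in> {..<n}" "r \<noteq> 1"
  then show "M 1 0 r * X r = 0"
    by (cases "r = 0") (auto simp: coeff_degree_0 coeff_eq_0_if_total_less)
qed (use two_le_n in auto)

lemma coeff_higher_degree_recursion:
  assumes "j < n" "k < n" "1 < l" "l < n"
  shows "M j k l = (\<Sum>j1\<le>j. \<Sum>k1\<le>k.
                     if 1 \<le> j1 + k1 \<and> l - 1 \<le> (j - j1) + (k - k1)
                     then M j1 k1 1 * M (j - j1) (k - k1) (l - 1) else 0)"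
proof -
  have "M j k l = (\<Sum>j1\<le>j. \<Sum>k1\<le>k. M j1 k1 1 * M (j - j1) (k - k1) (l - 1))"
    using coeff_Suc[of j k "l - 1"] assms by simp
  also have "\<dots> = (\<Sum>j1\<le>j. \<Sum>k1\<le>k.
                     if 1 \<le> j1 + k1 \<and> l - 1 \<le> (j - j1) + (k - k1)
                     then M j1 k1 1 * M (j - j1) (k - k1) (l - 1) else 0)"
  proof (intro sum.cong refl)
    fix j1 k1
    show "M j1 k1 1 * M (j - j1) (k - k1) (l - 1) =
        (if 1 \<le> j1 + k1 \<and> l - 1 \<le> (j - j1) + (k - k1)
         then M j1 k1 1 * M (j - j1) (k - k1) (l - 1) else 0)"
      using no_constant_term coeff_eq_0_if_total_less[of "j - j1" "k - k1" "l - 1"]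
      by (cases "j1 + k1 = 0") auto
  qed
  finally show ?thesis .
qed

context
  assumes first_var: "\<And>c. M 0 c 1 = 0"
begin

lemma coeff_eq_0_if_first_less:
  assumes "i < k"
  shows "M i j k = 0"
proof -
  have "j < (j + 1) * (k - i)" using assms by (cases "k - i") auto
  then show ?thesis using coeff_eq_0_below_weight[of "j + 1" i k j] first_var assms by simp
qed

lemma coeff_first_1: "r \<noteq> 1 \<Longrightarrow> M 1 s r = 0"
  using coeff_eq_0_if_first_less by (cases "r = 0") (auto simp: coeff_degree_0)

lemma sum_coeff_first_0: "(\<Sum>r<n. M 0 s r * X r) = (if s = 0 then X 0 else 0)"
proof -
  have "(\<Sum>r<n. M 0 s r * X r) = M 0 s 0 * X 0"
    by (rule sum_eq_single) (use two_le_n coeff_eq_0_if_first_less in auto)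
  then show ?thesis by (simp add: coeff_degree_0)
qed

end

context
  fixes m :: nat
  assumes pure_below: "\<And>c. c < m \<Longrightarrow> M 0 c 1 = 0" and m_pos: "1 \<le> m"
begin

lemma coeff_diag_first_power: "k < n \<Longrightarrow> M k 0 k = M 1 0 1 ^ k"
proof (induction k)
  case (Suc k)
  have "M (Suc k) 0 (Suc k) = (\<Sum>a\<le>Suc k. M a 0 1 * M (Suc k - a) 0 k)"
    using Suc.prems coeff_Suc[of "Suc k" 0 k] by simp
  also have "\<dots> = M 1 0 1 * M (Suc k - 1) 0 k"
  proof (rule sum_eq_single)
    fix a assume a: "a \<in> {..Suc k}" "a \<noteq> 1"
    show "M a 0 1 * M (Suc k - a) 0 k = 0"
    proof (cases "a = 0")
      case True then show ?thesis using no_constant_term by simp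
    next
      case False
      then have "Suc k - a < k" "0 < m * (k - (Suc k - a))" using m_pos a by auto
      then show ?thesis using coeff_eq_0_below_weight[OF pure_below] by simp
    qed
  qed auto
  finally show ?case using Suc by simp
qed (simp add: coeff_degree_0)

lemma cross_coeff_power:
  assumes "k < n" "m < n"
  shows "(\<Sum>a\<le>k. \<Sum>c\<le>m. M a c 1 * M (k - a) (m - c) k) = of_nat (k + 1) * M 1 0 1 ^ k * M 0 m 1"
  using assms(1)
proof (induction k)
  case 0
  have "(\<Sum>c\<le>m. M 0 c 1 * M 0 (m - c) 0) = M 0 m 1 * M 0 (m - m) 0"
    by (rule sum_eq_single) (auto simp: coeff_degree_0)
  then show ?case by (simp add: coeff_degree_0)
next
  case (Suc k)
  let ?F = "\<lambda>a c. M a c 1 * M (Suc k - a) (m - c) (Suc k)"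
  have "(\<Sum>a\<le>Suc k. \<Sum>c\<le>m. ?F a c) = (\<Sum>(a, c)\<in>{(0, m), (1, 0)}. ?F a c)"
  proof (rule sum_sum_eq_sum_support)
    fix a c assume a: "a \<in> {..Suc k}" and c: "c \<in> {..m}" and off: "(a, c) \<notin> {(0, m), (1, 0)}"
    show "?F a c = 0"
    proof (cases "a = 0")
      case True
      then have "c < m" using c off by auto
      then show ?thesis using pure_below True by simp
    next
      case False
      have "m - c < m * a"
      proof (cases "a = 1")
        case True
        then have "c \<noteq> 0" using off by auto
        then show ?thesis using True m_pos c by auto
      next
        case False
        then have "m * 2 \<le> m * a" using \<open>a \<noteq> 0\<close> by simp
        then show ?thesis using m_pos by linarith
      qed
      moreover have "Suc k - a < Suc k" "Suc k - (Suc k - a) = a" using False a by auto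
      ultimately show ?thesis using coeff_eq_0_below_weight[OF pure_below, where i = "Suc k - a" and k = "Suc k" and j = "m - c"]
        by simp
    qed
  qed (use m_pos in auto)
  also have "\<dots> = ?F 0 m + M 1 0 1 * M k m (Suc k)" using m_pos by simp
  also have "M k m (Suc k) = (\<Sum>a\<le>k. \<Sum>c\<le>m. M a c 1 * M (k - a) (m - c) k)"
    using coeff_Suc[of k m k] Suc.prems assms(2) by simp
  also have "?F 0 m = M 0 m 1 * M 1 0 1 ^ Suc k"
    using coeff_diag_first_power[of "Suc k"] Suc.prems by simp
  finally show ?case using Suc by (simp add: algebra_simps)
qed

end

lemma first_var_vanishes:
  assumes char: "of_nat n \<noteq> (0::'a)" and unit: "M 1 0 1 \<noteq> 0"
  shows "M 0 c 1 = 0"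
proof (rule ccontr)
  assume "M 0 c 1 \<noteq> 0"
  define m where "m = (LEAST c. M 0 c 1 \<noteq> 0)"
  have pure: "M 0 m 1 \<noteq> 0" unfolding m_def using \<open>M 0 c 1 \<noteq> 0\<close> by (rule LeastI)
  have pure_below: "\<And>c. c < m \<Longrightarrow> M 0 c 1 = 0" unfolding m_def using not_less_Least by blast
  have "1 \<le> m" using pure no_constant_term by (cases m) auto
  have "m < n" using pure coeff_eq_0_outside by (meson not_le)
  have "0 = (\<Sum>a\<le>n - 1. \<Sum>c\<le>m. M a c 1 * M (n - 1 - a) (m - c) (n - 1))"
    using coeff_add[of "n - 1" m 1 "n - 1"] two_le_n \<open>m < n\<close> by simp
  also have "\<dots> = of_nat n * M 1 0 1 ^ (n - 1) * M 0 m 1"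
    using cross_coeff_power[OF pure_below \<open>1 \<le> m\<close>, of "n - 1"] two_le_n \<open>m < n\<close> by simp
  finally show False using char unit pure by simp
qed

lemma coeff_second_0_below:
  assumes below: "\<And>a. a < J \<Longrightarrow> M a 0 1 = (if a = 1 then 1 else 0)" and "2 \<le> J"
  shows "1 \<le> r \<Longrightarrow> r < n \<Longrightarrow> i < J + r - 1 \<Longrightarrow> M i 0 r = (if i = r then 1 else 0)"
proof (induction r arbitrary: i)
  case (Suc r)
  show ?case
  proof (cases "r = 0")
    case True then show ?thesis using below[of i] Suc.prems by simp
  next
    case r0: False
    show ?thesis
    proof (cases "i < n")
      case False then show ?thesis using coeff_eq_0_outside Suc.prems by auto
    next
      case True
      have "M i 0 (Suc r) = (\<Sum>a\<le>i. M a 0 1 * M (i - a) 0 r)"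
        using True Suc.prems coeff_Suc[of i 0 r] by simp
      also have "\<dots> = (if 1 \<le> i then M (i - 1) 0 r else 0)"
      proof (cases "1 \<le> i")
        case True
        have "(\<Sum>a\<le>i. M a 0 1 * M (i - a) 0 r) = M 1 0 1 * M (i - 1) 0 r"
        proof (rule sum_eq_single)
          fix a assume a: "a \<in> {..i}" "a \<noteq> 1"
          show "M a 0 1 * M (i - a) 0 r = 0"
          proof (cases "a < J")
            case True then show ?thesis using below a by simp
          next
            case False
            then have "i - a < J + r - 1" "i - a \<noteq> r" using Suc.prems r0 \<open>2 \<le> J\<close> by auto
            then show ?thesis using Suc.IH[of "i - a"] r0 Suc.prems by simp
          qed
        qed (use True in auto)
        then show ?thesis using True below[of 1] \<open>2 \<le> J\<close> by auto
      next
        case False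
        then have "i = 0" by simp
        then show ?thesis using no_constant_term by simp
      qed
      also have "\<dots> = (if i = Suc r then 1 else 0)"
        using Suc.IH[of "i - 1"] r0 Suc.prems by auto
      finally show ?thesis .
    qed
  qed
qed simp

text \<open>The hypothesis says that the functional \<open>\<alpha>\<close> is invariant under the substitution
  \<open>u \<mapsto> f(u,0)\<close>; since \<open>\<alpha>\<close> does not vanish on \<open>u\<close>, this forces \<open>f(u,0) = u\<close>.\<close>

lemma coeff_second_0_eq_delta:
  assumes nonzero: "\<alpha> 1 \<noteq> 0" and invariant: "\<And>j. j < n \<Longrightarrow> \<alpha> j = (\<Sum>r<n. M j 0 r * \<alpha> r)"
  shows "M j 0 1 = (if j = 1 then 1 else 0)"
proof (induction j rule: less_induct)
  case (less j)
  consider "n \<le> j" | "j = 0" | "j = 1" | "2 \<le> j" "j < n" by linarith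
  then show ?case
  proof cases
    case 1 then show ?thesis using coeff_eq_0_outside two_le_n by auto
  next
    case 2 then show ?thesis using no_constant_term by simp
  next
    case 3
    then show ?thesis using invariant[of 1] sum_row_1_0[of \<alpha>] two_le_n nonzero by simp
  next
    case 4
    have below: "\<And>a. a < j \<Longrightarrow> M a 0 1 = (if a = 1 then 1 else 0)" using less by simp
    have "(\<Sum>r<n. M j 0 r * \<alpha> r) = (\<Sum>r\<in>{1, j}. M j 0 r * \<alpha> r)"
    proof (rule sum.mono_neutral_right)
      show "\<forall>r\<in>{..<n} - {1, j}. M j 0 r * \<alpha> r = 0"
      proof
        fix r assume r: "r \<in> {..<n} - {1, j}"
        show "M j 0 r * \<alpha> r = 0"
        proof (cases "r = 0")
          case True then show ?thesis using 4 by (simp add: coeff_degree_0)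
        next
          case False
          then show ?thesis using coeff_second_0_below[OF below \<open>2 \<le> j\<close>, of r j] r by auto
        qed
      qed
    qed (use 4 in auto)
    also have "\<dots> = M j 0 1 * \<alpha> 1 + \<alpha> j"
      using coeff_second_0_below[OF below \<open>2 \<le> j\<close>, of j j] 4 by simp
    finally show ?thesis using invariant[of j] nonzero 4 by simp
  qed
qed

end

text \<open>In terms of \<open>f\<close>: \<open>f(0,v) = 0\<close> and \<open>f(u,0) = u\<close>.\<close>

locale normalized_coalg_map = coalg_map +
  assumes first_var: "M 0 c 1 = 0"
    and second_var: "M a 0 1 = (if a = 1 then 1 else 0)"
begin

lemma coeff_second_0: "r < n \<Longrightarrow> M i 0 r = (if i = r then 1 else 0)"
proof (cases "r = 0")
  case True then show ?thesis by (simp add: coeff_degree_0)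
next
  case False
  assume "r < n"
  then show ?thesis
    using coeff_second_0_below[of n r i] second_var False coeff_eq_0_outside two_le_n
    by (cases "i < n") auto
qed

lemma coeff_second_0_off_diag: "r \<noteq> i \<Longrightarrow> M i 0 r = 0"
  using coeff_second_0[of r i] coeff_eq_0_outside by (cases "r < n") auto

lemma coeff_second_0_diag: "i < n \<Longrightarrow> M i 0 i = 1"
  using coeff_second_0[of i i] by simp

text \<open>Writing \<open>f = u + v g\<close>, we have \<open>f\<^sup>r \<equiv> u\<^sup>r + r u\<^bsup>r-1\<^esup> v g\<close> modulo \<open>v\<^sup>2\<close>.\<close>

lemma coeff_second_1:
  "r < n \<Longrightarrow> 1 \<le> r \<Longrightarrow> i < n \<Longrightarrow>
   M i 1 r = (if r \<le> i + 1 then of_nat r * M (i + 1 - r) 1 1 else 0)"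
proof (induction r arbitrary: i)
  case (Suc r)
  show ?case
  proof (cases "r = 0")
    case r0: False
    have "M i 1 (Suc r) = (\<Sum>a\<le>i. M a 0 1 * M (i - a) 1 r) + (\<Sum>a\<le>i. M a 1 1 * M (i - a) 0 r)"
      using Suc.prems coeff_Suc[of i 1 r] by (simp add: sum_atMost_1 sum.distrib)
    also have "(\<Sum>a\<le>i. M a 0 1 * M (i - a) 1 r) = (if 1 \<le> i then M (i - 1) 1 r else 0)"
    proof (cases "1 \<le> i")
      case True
      have "(\<Sum>a\<le>i. M a 0 1 * M (i - a) 1 r) = M 1 0 1 * M (i - 1) 1 r"
        by (rule sum_eq_single) (use True second_var in auto)
      then show ?thesis using True second_var[of 1] by simp
    next
      case False
      then have "i = 0" by simp
      then show ?thesis using first_var by simp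
    qed
    also have "(\<Sum>a\<le>i. M a 1 1 * M (i - a) 0 r) = (if r \<le> i then M (i - r) 1 1 else 0)"
    proof (cases "r \<le> i")
      case True
      have "(\<Sum>a\<le>i. M a 1 1 * M (i - a) 0 r) = M (i - r) 1 1 * M (i - (i - r)) 0 r"
        by (rule sum_eq_single) (use True coeff_second_0 Suc.prems in auto)
      then show ?thesis using True coeff_second_0 Suc.prems by simp
    next
      case False
      then show ?thesis using coeff_second_0 Suc.prems by (auto intro: sum.neutral)
    qed
    also have "(if 1 \<le> i then M (i - 1) 1 r else 0) = (if r \<le> i then of_nat r * M (i - r) 1 1 else 0)"
      using Suc.IH[of "i - 1"] r0 Suc.prems by auto
    finally show ?thesis by (auto simp: algebra_simps)
  qed simp
qed simp

lemma coeff_diag_second_1: "l < n \<Longrightarrow> 1 \<le> l \<Longrightarrow> M l 1 l = of_nat l * M 1 1 1"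
  using coeff_second_1[of l l] by simp

lemma sum_coeff_restrict:
  assumes "1 \<le> i" "i < n"
  shows "(\<Sum>r<n. M i s r * X r) = (\<Sum>h\<in>{1..i}. M i s h * X h)"
proof (rule sum.mono_neutral_right)
  show "\<forall>r\<in>{..<n} - {1..i}. M i s r * X r = 0"
    using assms coeff_eq_0_if_first_less[OF first_var] by (auto simp: coeff_degree_0 not_le)
qed (use assms in auto)

lemma bil_coeff_restrict:
  assumes "1 \<le> i" "i < n" "1 \<le> j" "j < n"
  shows "bil n M (M i c) (M j e) 1 = (\<Sum>h\<in>{1..i}. \<Sum>l\<in>{1..j}. M i c h * M j e l * M h l 1)"
proof -
  have "bil n M (M i c) (M j e) 1 = (\<Sum>r<n. M i c r * (\<Sum>r'<n. M j e r' * M r r' 1))"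
    by (simp add: bil_def sum_distrib_left mult.assoc)
  also have "\<dots> = (\<Sum>h\<in>{1..i}. M i c h * (\<Sum>l\<in>{1..j}. M j e l * M h l 1))"
    using sum_coeff_restrict[of i] sum_coeff_restrict[of j] assms by simp
  finally show ?thesis by (simp add: sum_distrib_left mult.assoc)
qed

lemma coeff_second_1_recursion:
  assumes cycle: "(\<Sum>s\<le>j. bil n M (M 1 s) (M 1 (j - s)) 1) = (\<Sum>t\<le>1. bil n M (M 1 (1 - t)) (M j t) 1)"
    and "1 < j" "j < n"
  shows "M j 1 1 * M 1 1 1 = M 1 1 1 * (\<Sum>a<j. M 1 a 1 * M 1 (j - a) 1)
            - (\<Sum>l\<in>{2..j}. of_nat l * M (j - l + 1) 1 1 * M 1 l 1)"
proof -
  have one: "1 < n" using two_le_n by simp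
  have "(\<Sum>s\<le>j. bil n M (M 1 s) (M 1 (j - s)) 1) = (\<Sum>s\<le>j. M 1 s 1 * (M 1 (j - s) 1 * M 1 1 1))"
  proof (rule sum.cong)
    fix s
    have "bil n M (M 1 s) (M 1 (j - s)) 1 = M 1 s 1 * (\<Sum>r<n. M 1 (j - s) r * M 1 r 1)"
      by (rule bil_single_left) (use one coeff_first_1[OF first_var] in auto)
    also have "(\<Sum>r<n. M 1 (j - s) r * M 1 r 1) = M 1 (j - s) 1 * M 1 1 1"
      by (rule sum_eq_single) (use one coeff_first_1[OF first_var] in auto)
    finally show "bil n M (M 1 s) (M 1 (j - s)) 1 = M 1 s 1 * (M 1 (j - s) 1 * M 1 1 1)" .
  qed simp
  also have "\<dots> = M 1 1 1 * (\<Sum>a<j. M 1 a 1 * M 1 (j - a) 1) + M 1 1 1 * M 1 j 1"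
    using second_var[of 1] by (simp add: lessThan_Suc_atMost[symmetric] sum_distrib_left algebra_simps)
  finally have lhs: "(\<Sum>s\<le>j. bil n M (M 1 s) (M 1 (j - s)) 1) =
      M 1 1 1 * (\<Sum>a<j. M 1 a 1 * M 1 (j - a) 1) + M 1 1 1 * M 1 j 1" .
  have "bil n M (M 1 1) (M j 0) 1 = M 1 1 1 * (\<Sum>r<n. M j 0 r * M 1 r 1)"
    by (rule bil_single_left) (use one coeff_first_1[OF first_var] in auto)
  also have "(\<Sum>r<n. M j 0 r * M 1 r 1) = M 1 j 1"
    using sum_eq_single[of "{..<n}" j "\<lambda>r. M j 0 r * M 1 r 1"] \<open>j < n\<close>
    by (simp add: coeff_second_0_off_diag coeff_second_0_diag)
  finally have rhs0: "bil n M (M 1 1) (M j 0) 1 = M 1 1 1 * M 1 j 1" .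
  have "bil n M (M 1 0) (M j 1) 1 = M 1 0 1 * (\<Sum>r<n. M j 1 r * M 1 r 1)"
    by (rule bil_single_left) (use one coeff_first_1[OF first_var] in auto)
  also have "\<dots> = (\<Sum>r\<in>{1..j}. M j 1 r * M 1 r 1)"
    using sum_coeff_restrict[of j 1 "\<lambda>r. M 1 r 1"] \<open>1 < j\<close> \<open>j < n\<close> second_var[of 1] by simp
  also have "\<dots> = M j 1 1 * M 1 1 1 + (\<Sum>l\<in>{2..j}. of_nat l * M (j - l + 1) 1 1 * M 1 l 1)"
  proof -
    have "{1..j} = insert 1 {2..j}" using \<open>1 < j\<close> by auto
    moreover have "M j 1 l = of_nat l * M (j - l + 1) 1 1" if "l \<in> {2..j}" for l
      using coeff_second_1[of l j] that \<open>j < n\<close> by (auto simp: Suc_diff_le)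
    ultimately show ?thesis by simp
  qed
  finally have rhs1: "bil n M (M 1 0) (M j 1) 1 =
      M j 1 1 * M 1 1 1 + (\<Sum>l\<in>{2..j}. of_nat l * M (j - l + 1) 1 1 * M 1 l 1)" .
  show ?thesis using cycle lhs rhs0 rhs1 by (simp add: sum_atMost_1 algebra_simps)
qed

lemma bil_sum_second_1:
  assumes "1 \<le> i" "i < n"
  shows "(\<Sum>s\<le>j. bil n M (M i s) (M 1 (j - s)) 1) =
      (\<Sum>a\<le>j. \<Sum>h\<in>{1..i}. M i a h * M 1 (j - a) 1 * M h 1 1)"
proof (rule sum.cong)
  fix s
  have "bil n M (M i s) (M 1 (j - s)) 1 = M 1 (j - s) 1 * (\<Sum>r<n. M i s r * M r 1 1)"
    by (rule bil_single_right) (use two_le_n coeff_first_1[OF first_var] in auto)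
  also have "(\<Sum>r<n. M i s r * M r 1 1) = (\<Sum>h\<in>{1..i}. M i s h * M h 1 1)"
    by (rule sum_coeff_restrict) (use assms in auto)
  finally show "bil n M (M i s) (M 1 (j - s)) 1 = (\<Sum>h\<in>{1..i}. M i s h * M 1 (j - s) 1 * M h 1 1)"
    by (simp add: sum_distrib_left algebra_simps)
qed simp

lemma coeff_degree_1_recursion:
  assumes cycle: "(\<Sum>s\<le>j. bil n M (M i s) (M 1 (j - s)) 1) = (\<Sum>t\<le>1. bil n M (M i (1 - t)) (M j t) 1)"
    and "1 < i" "i < n" "1 < j" "j < n"
  shows "of_nat (i + j - 1) * M 1 1 1 * M i j 1 =
            (\<Sum>a\<le>j. \<Sum>h\<in>{1..i}. if (a, h) = (j, 1) then 0
                                    else M i a h * M 1 (j - a) 1 * M h 1 1)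
            - (\<Sum>c\<le>1. \<Sum>h\<in>{1..i}. \<Sum>l\<in>{1..j}. if (h, l) = (i, j) then 0
                                    else M i c h * M j (1 - c) l * M h l 1)"
proof -
  have first: "(\<Sum>a\<le>j. \<Sum>h\<in>{1..i}. if (a, h) = (j, 1) then 0 else M i a h * M 1 (j - a) 1 * M h 1 1)
      = (\<Sum>s\<le>j. bil n M (M i s) (M 1 (j - s)) 1) - M i j 1 * M 1 1 1"
    unfolding bil_sum_second_1[OF \<open>1 < i\<close>[THEN less_imp_le] \<open>i < n\<close>]
    using sum_sum_except_term[of "{..j}" "{1..i}" j 1 "\<lambda>a h. M i a h * M 1 (j - a) 1 * M h 1 1"]
      assms second_var[of 1]
    by simp
  have rhs: "(\<Sum>t\<le>1. bil n M (M i (1 - t)) (M j t) 1) =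
     (\<Sum>c\<le>1. \<Sum>h\<in>{1..i}. \<Sum>l\<in>{1..j}. M i c h * M j (1 - c) l * M h l 1)"
    using bil_coeff_restrict[of i j] assms by (simp add: sum_atMost_1 add.commute)
  have diag: "(\<Sum>c\<le>1. M i c i * M j (1 - c) j * M i j 1) = (of_nat i + of_nat j) * M 1 1 1 * M i j 1"
    using coeff_second_0_diag[of i] coeff_second_0_diag[of j] coeff_diag_second_1[of i]
      coeff_diag_second_1[of j] assms
    by (simp add: sum_atMost_1 algebra_simps)
  have second: "(\<Sum>c\<le>1. \<Sum>h\<in>{1..i}. \<Sum>l\<in>{1..j}. if (h, l) = (i, j) then 0
                                    else M i c h * M j (1 - c) l * M h l 1)
      = (\<Sum>t\<le>1. bil n M (M i (1 - t)) (M j t) 1) - (of_nat i + of_nat j) * M 1 1 1 * M i j 1"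
    unfolding rhs diag[symmetric] sum_subtractf[symmetric]
  proof (rule sum.cong[OF refl])
    fix c
    show "(\<Sum>h\<in>{1..i}. \<Sum>l\<in>{1..j}. if (h, l) = (i, j) then 0 else M i c h * M j (1 - c) l * M h l 1)
        = (\<Sum>h\<in>{1..i}. \<Sum>l\<in>{1..j}. M i c h * M j (1 - c) l * M h l 1) - M i c i * M j (1 - c) j * M i j 1"
      by (rule sum_sum_except_term) (use assms in auto)
  qed
  have ij: "of_nat (i + j - 1) = (of_nat i + of_nat j - 1 :: 'a)" using assms by (simp add: of_nat_diff)
  show ?thesis unfolding first second ij using cycle by (simp add: algebra_simps)
qed

end

locale coalg_map_pair = P: coalg_map n p + D: coalg_map n d
  for n and p d :: "nat \<Rightarrow> nat \<Rightarrow> nat \<Rightarrow> 'a::field"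
begin

lemma coeff_eq_if_degree_1_eq_below:
  assumes lower: "\<And>a b. a + b < m \<Longrightarrow> d a b 1 = p a b 1"
  shows "1 \<le> r \<Longrightarrow> a + b < m + r - 1 \<Longrightarrow> d a b r = p a b r"
proof (induction r arbitrary: a b)
  case (Suc r)
  show ?case
  proof (cases "r = 0")
    case True then show ?thesis using lower Suc.prems by simp
  next
    case r0: False
    show ?thesis
    proof (cases "a < n \<and> b < n \<and> Suc r < n")
      case False then show ?thesis using P.coeff_eq_0_outside D.coeff_eq_0_outside by auto
    next
      case True
      have "d x y 1 * d (a - x) (b - y) r = p x y 1 * p (a - x) (b - y) r" if "x \<le> a" "y \<le> b" for x y
      proof (cases "x + y = 0")
        case True then show ?thesis using P.no_constant_term D.no_constant_term by simp
      next
        case False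
        show ?thesis
        proof (cases "x + y < m")
          case True
          have "(a - x) + (b - y) < m + r - 1" using False that Suc.prems by auto
          then show ?thesis using lower[OF True] Suc.IH[of "a - x" "b - y"] r0 by simp
        next
          case False
          then have "(a - x) + (b - y) < r" using that Suc.prems by auto
          then show ?thesis using P.coeff_eq_0_if_total_less D.coeff_eq_0_if_total_less by simp
        qed
      qed
      then show ?thesis using True P.coeff_Suc[of a b r] D.coeff_Suc[of a b r] by simp
    qed
  qed
qed simp

lemma eq_if_degree_1_eq:
  assumes "\<And>a b. d a b 1 = p a b 1"
  shows "d = p"
proof (intro ext)
  fix a b r
  show "d a b r = p a b r"
    using coeff_eq_if_degree_1_eq_below[of "a + b + 1" r a b] assms
    by (cases "r = 0") (auto simp: P.coeff_degree_0 D.coeff_degree_0)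
qed

end

text \<open>\<open>cycle1\<close> and \<open>cycle2\<close> are the \<open>x\<^sub>1\<close>-coefficients of the cycle identities (1)
  and (2), the latter only for \<open>b = x\<^sub>1\<close>; \<open>p_unit\<close> and \<open>d_unit\<close> come from regularity.\<close>

locale q_cycle_pair = coalg_map_pair n p d
  for n and p d :: "nat \<Rightarrow> nat \<Rightarrow> nat \<Rightarrow> 'a::field_char_0" +
  assumes cycle1: "i < n \<Longrightarrow> j < n \<Longrightarrow> l < n \<Longrightarrow>
      (\<Sum>s\<le>j. bil n p (p i s) (d l (j - s)) 1) = (\<Sum>t\<le>l. bil n p (p i (l - t)) (p j t) 1)"
    and cycle2: "i < n \<Longrightarrow> l < n \<Longrightarrow>
      (\<Sum>s\<le>1. bil n d (p i s) (p l (1 - s)) 1) = (\<Sum>t\<le>l. bil n p (d i (l - t)) (d 1 t) 1)"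
    and p_unit: "p 1 0 1 \<noteq> 0" and d_unit: "d 1 0 1 \<noteq> 0" and p_111: "p 1 1 1 \<noteq> 0"
begin

lemma p_first_var: "p 0 c 1 = 0"
  using P.first_var_vanishes p_unit P.two_le_n by simp

lemma d_first_var: "d 0 c 1 = 0"
  using D.first_var_vanishes d_unit P.two_le_n by simp

text \<open>Identity (1) with \<open>c = x\<^sub>0\<close>, resp. \<open>b = x\<^sub>0\<close>, says that \<open>j \<mapsto> p 1 j 1\<close>
  is invariant in the sense of \<open>coeff_second_0_eq_delta\<close> for \<open>p\<close>, resp. \<open>d\<close>.\<close>

lemma p_second_var: "p a 0 1 = (if a = 1 then 1 else 0)"
proof (rule P.coeff_second_0_eq_delta[of "\<lambda>r. p 1 r 1"])
  fix j assume "j < n"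
  have one: "1 < n" using P.two_le_n by simp
  have "(\<Sum>s\<le>j. bil n p (p 1 s) (d 0 (j - s)) 1) = (\<Sum>s\<le>j. p 1 s 1 * (if j - s = 0 then p 1 0 1 else 0))"
  proof (rule sum.cong)
    fix s
    have "bil n p (p 1 s) (d 0 (j - s)) 1 = p 1 s 1 * (\<Sum>r<n. d 0 (j - s) r * p 1 r 1)"
      by (rule bil_single_left) (use one P.coeff_first_1[OF p_first_var] in auto)
    then show "bil n p (p 1 s) (d 0 (j - s)) 1 = p 1 s 1 * (if j - s = 0 then p 1 0 1 else 0)"
      using D.sum_coeff_first_0[OF d_first_var] by simp
  qed simp
  also have "\<dots> = p 1 j 1 * p 1 0 1"
    by (subst sum_eq_single[of _ j]) auto
  finally have "p 1 j 1 * p 1 0 1 = bil n p (p 1 0) (p j 0) 1"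
    using cycle1[of 1 j 0] one \<open>j < n\<close> by simp
  also have "\<dots> = p 1 0 1 * (\<Sum>r<n. p j 0 r * p 1 r 1)"
    by (rule bil_single_left) (use one P.coeff_first_1[OF p_first_var] in auto)
  finally show "p 1 j 1 = (\<Sum>r<n. p j 0 r * p 1 r 1)" using p_unit by (simp add: mult.commute)
qed (rule p_111)

lemma d_second_var: "d a 0 1 = (if a = 1 then 1 else 0)"
proof (rule D.coeff_second_0_eq_delta[of "\<lambda>r. p 1 r 1"])
  fix l assume "l < n"
  have one: "1 < n" using P.two_le_n by simp
  have "(\<Sum>t\<le>l. bil n p (p 1 (l - t)) (p 0 t) 1) = (\<Sum>t\<le>l. p 1 (l - t) 1 * (if t = 0 then p 1 0 1 else 0))"
  proof (rule sum.cong)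
    fix t
    have "bil n p (p 1 (l - t)) (p 0 t) 1 = p 1 (l - t) 1 * (\<Sum>r<n. p 0 t r * p 1 r 1)"
      by (rule bil_single_left) (use one P.coeff_first_1[OF p_first_var] in auto)
    then show "bil n p (p 1 (l - t)) (p 0 t) 1 = p 1 (l - t) 1 * (if t = 0 then p 1 0 1 else 0)"
      using P.sum_coeff_first_0[OF p_first_var] by simp
  qed simp
  also have "\<dots> = p 1 l 1 * p 1 0 1"
    by (subst sum_eq_single[of _ 0]) auto
  finally have "p 1 l 1 * p 1 0 1 = bil n p (p 1 0) (d l 0) 1"
    using cycle1[of 1 0 l] one \<open>l < n\<close> by simp
  also have "\<dots> = p 1 0 1 * (\<Sum>r<n. d l 0 r * p 1 r 1)"
    by (rule bil_single_left) (use one P.coeff_first_1[OF p_first_var] in auto)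
  finally show "p 1 l 1 = (\<Sum>r<n. d l 0 r * p 1 r 1)" using p_unit by (simp add: mult.commute)
qed (rule p_111)

sublocale P: normalized_coalg_map n p
  by unfold_locales (fact p_first_var, fact p_second_var)

sublocale D: normalized_coalg_map n d
  by unfold_locales (fact d_first_var, fact d_second_var)

end

context q_cycle_pair
begin

lemma cycle1_lhs:
  assumes "i < n" "l < n"
  shows "(\<Sum>s\<le>1. bil n p (p i s) (d l (1 - s)) 1) =
      (\<Sum>r<n. d l 1 r * p i r 1) + (\<Sum>r<n. p i 1 r * p r l 1)"
proof -
  have "bil n p (p i 0) (d l 1) 1 = (\<Sum>r<n. d l 1 r * p i r 1)"
    using bil_single_left[of i n "p i 0"] assms P.coeff_second_0_off_diag P.coeff_second_0_diag by simp
  moreover have "bil n p (p i 1) (d l 0) 1 = (\<Sum>r<n. p i 1 r * p r l 1)"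
    using bil_single_right[of l n "d l 0"] assms D.coeff_second_0_off_diag D.coeff_second_0_diag by simp
  ultimately show ?thesis by (simp add: sum_atMost_1)
qed

lemma cycle2_lhs:
  assumes "i < n" "l < n"
  shows "(\<Sum>s\<le>1. bil n d (p i s) (p l (1 - s)) 1) =
      (\<Sum>r<n. p l 1 r * d i r 1) + (\<Sum>r<n. p i 1 r * d r l 1)"
proof -
  have "bil n d (p i 0) (p l 1) 1 = (\<Sum>r<n. p l 1 r * d i r 1)"
    using bil_single_left[of i n "p i 0"] assms P.coeff_second_0_off_diag P.coeff_second_0_diag by simp
  moreover have "bil n d (p i 1) (p l 0) 1 = (\<Sum>r<n. p i 1 r * d r l 1)"
    using bil_single_right[of l n "p l 0"] assms P.coeff_second_0_off_diag P.coeff_second_0_diag by simp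
  ultimately show ?thesis by (simp add: sum_atMost_1)
qed

lemma cycle_rhs:
  assumes "\<And>s r. r \<noteq> 1 \<Longrightarrow> M 1 s r = 0"
  shows "(\<Sum>t\<le>l. bil n p (M i (l - t)) (M 1 t) 1) = (\<Sum>t\<le>l. \<Sum>r<n. M 1 t 1 * M i (l - t) r * p r 1 1)"
proof (rule sum.cong)
  fix t
  have "bil n p (M i (l - t)) (M 1 t) 1 = M 1 t 1 * (\<Sum>r<n. M i (l - t) r * p r 1 1)"
    by (rule bil_single_right) (use P.two_le_n assms in auto)
  then show "bil n p (M i (l - t)) (M 1 t) 1 = (\<Sum>r<n. M 1 t 1 * M i (l - t) r * p r 1 1)"
    by (simp add: sum_distrib_left mult.assoc)
qed simp

context
  fixes i l :: nat
  assumes lower: "\<And>a b. a + b < i + l \<Longrightarrow> d a b 1 = p a b 1"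
    and i_pos: "1 \<le> i" and i_less: "i < n" and l_pos: "1 \<le> l" and l_less: "l < n"
begin

lemma higher_degree_eq: "1 \<le> r \<Longrightarrow> a + b < i + l + r - 1 \<Longrightarrow> d a b r = p a b r"
  by (rule coeff_eq_if_degree_1_eq_below[OF lower])

lemma sum_p_l_1_defect: "(\<Sum>r<n. p l 1 r * (d i r 1 - p i r 1)) = of_nat l * p 1 1 1 * (d i l 1 - p i l 1)"
proof -
  have "(\<Sum>r<n. p l 1 r * (d i r 1 - p i r 1)) = p l 1 l * (d i l 1 - p i l 1)"
  proof (rule sum_eq_single)
    fix r assume "r \<in> {..<n}" "r \<noteq> l"
    then show "p l 1 r * (d i r 1 - p i r 1) = 0"
      using lower[of i r] P.coeff_eq_0_if_first_less[OF p_first_var, of l r 1] by (cases "r < l") auto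
  qed (use l_less in auto)
  then show ?thesis using P.coeff_diag_second_1[OF l_less l_pos] by simp
qed

lemma sum_p_i_1_defect: "(\<Sum>r<n. p i 1 r * (d r l 1 - p r l 1)) = of_nat i * p 1 1 1 * (d i l 1 - p i l 1)"
proof -
  have "(\<Sum>r<n. p i 1 r * (d r l 1 - p r l 1)) = p i 1 i * (d i l 1 - p i l 1)"
  proof (rule sum_eq_single)
    fix r assume "r \<in> {..<n}" "r \<noteq> i"
    then show "p i 1 r * (d r l 1 - p r l 1) = 0"
      using lower[of r l] P.coeff_eq_0_if_first_less[OF p_first_var, of i r 1] by (cases "r < i") auto
  qed (use i_less in auto)
  then show ?thesis using P.coeff_diag_second_1[OF i_less i_pos] by simp
qed

lemma sum_defect_l_1:
  "(\<Sum>r<n. (d l 1 r - p l 1 r) * p i r 1) = (if i = 1 then p 1 1 1 * (d l 1 1 - p l 1 1) else 0)"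
proof -
  have "(d l 1 r - p l 1 r) * p i r 1 = (if i = 1 \<and> r = 1 then p 1 1 1 * (d l 1 1 - p l 1 1) else 0)"
    for r
  proof (cases "r = 0")
    case True then show ?thesis by (simp add: P.coeff_degree_0 D.coeff_degree_0)
  next
    case False
    show ?thesis
    proof (cases "i = 1 \<and> r = 1")
      case False
      then have "l + 1 < i + l + r - 1" using \<open>r \<noteq> 0\<close> i_pos by arith
      then show ?thesis using higher_degree_eq[of r l 1] False \<open>r \<noteq> 0\<close> by auto
    qed simp
  qed
  then show ?thesis using P.two_le_n by simp
qed

lemma sum_d_defect: "(\<Sum>t\<le>l. \<Sum>r<n. d 1 t 1 * (d i (l - t) r - p i (l - t) r) * p r 1 1) =
    p 1 1 1 * (d i l 1 - p i l 1)"
proof -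
  have "(\<Sum>t\<le>l. \<Sum>r<n. d 1 t 1 * (d i (l - t) r - p i (l - t) r) * p r 1 1) =
      (\<Sum>(t, r)\<in>{(0, 1)}. d 1 t 1 * (d i (l - t) r - p i (l - t) r) * p r 1 1)"
  proof (rule sum_sum_eq_sum_support)
    fix t r assume "t \<in> {..l}" "r \<in> {..<n}" "(t, r) \<notin> {(0, 1)}"
    show "d 1 t 1 * (d i (l - t) r - p i (l - t) r) * p r 1 1 = 0"
    proof (cases "r = 0")
      case False
      then have "i + (l - t) < i + l + r - 1" using \<open>t \<in> {..l}\<close> \<open>(t, r) \<notin> {(0, 1)}\<close> by auto
      then show ?thesis using higher_degree_eq[of r i "l - t"] False by simp
    next
      case True
      then show ?thesis using p_first_var by simp
    qed
  qed (use P.two_le_n in auto)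
  then show ?thesis using d_second_var[of 1] by (simp add: mult.commute)
qed

lemma sum_defect_1_t:
  "(\<Sum>t\<le>l. \<Sum>r<n. (d 1 t 1 - p 1 t 1) * p i (l - t) r * p r 1 1) =
    (if i = 1 then p 1 1 1 * (d 1 l 1 - p 1 l 1) else 0)"
proof (cases "i = 1")
  case True
  have "(\<Sum>t\<le>l. \<Sum>r<n. (d 1 t 1 - p 1 t 1) * p i (l - t) r * p r 1 1) =
      (\<Sum>(t, r)\<in>{(l, 1)}. (d 1 t 1 - p 1 t 1) * p i (l - t) r * p r 1 1)"
  proof (rule sum_sum_eq_sum_support)
    fix t r assume "t \<in> {..l}" "r \<in> {..<n}" "(t, r) \<notin> {(l, 1)}"
    then consider "t < l" | "t = l" "r \<noteq> 1" by fastforce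
    then show "(d 1 t 1 - p 1 t 1) * p i (l - t) r * p r 1 1 = 0"
      using lower[of 1 t] True P.coeff_second_0_off_diag[of r 1] by cases auto
  qed (use P.two_le_n in auto)
  then show ?thesis using True p_second_var[of 1] by (simp add: mult.commute)
next
  case False
  then have "d 1 t 1 = p 1 t 1" if "t \<le> l" for t using lower[of 1 t] that i_pos by simp
  then show ?thesis using False by simp
qed

lemma cycle_lhs_difference:
  "(\<Sum>s\<le>1. bil n d (p i s) (p l (1 - s)) 1) - (\<Sum>s\<le>1. bil n p (p i s) (d l (1 - s)) 1) =
    of_nat l * p 1 1 1 * (d i l 1 - p i l 1) - (if i = 1 then p 1 1 1 * (d l 1 1 - p l 1 1) else 0)
    + of_nat i * p 1 1 1 * (d i l 1 - p i l 1)"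
proof -
  have "(\<Sum>s\<le>1. bil n d (p i s) (p l (1 - s)) 1) - (\<Sum>s\<le>1. bil n p (p i s) (d l (1 - s)) 1) =
      (\<Sum>r<n. p l 1 r * (d i r 1 - p i r 1)) - (\<Sum>r<n. (d l 1 r - p l 1 r) * p i r 1)
      + (\<Sum>r<n. p i 1 r * (d r l 1 - p r l 1))"
    unfolding cycle1_lhs[OF i_less l_less] cycle2_lhs[OF i_less l_less]
    by (simp add: sum_subtractf algebra_simps)
  then show ?thesis unfolding sum_p_l_1_defect sum_defect_l_1 sum_p_i_1_defect .
qed

lemma cycle_rhs_difference:
  "(\<Sum>t\<le>l. bil n p (d i (l - t)) (d 1 t) 1) - (\<Sum>t\<le>l. bil n p (p i (l - t)) (p 1 t) 1) =
    p 1 1 1 * (d i l 1 - p i l 1) + (if i = 1 then p 1 1 1 * (d 1 l 1 - p 1 l 1) else 0)"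
proof -
  have "(\<Sum>t\<le>l. bil n p (d i (l - t)) (d 1 t) 1) = (\<Sum>t\<le>l. \<Sum>r<n. d 1 t 1 * d i (l - t) r * p r 1 1)"
    by (rule cycle_rhs) (rule D.coeff_first_1[OF d_first_var])
  moreover have "(\<Sum>t\<le>l. bil n p (p i (l - t)) (p 1 t) 1) =
      (\<Sum>t\<le>l. \<Sum>r<n. p 1 t 1 * p i (l - t) r * p r 1 1)"
    by (rule cycle_rhs) (rule P.coeff_first_1[OF p_first_var])
  ultimately have "(\<Sum>t\<le>l. bil n p (d i (l - t)) (d 1 t) 1) - (\<Sum>t\<le>l. bil n p (p i (l - t)) (p 1 t) 1) =
      (\<Sum>t\<le>l. \<Sum>r<n. d 1 t 1 * (d i (l - t) r - p i (l - t) r) * p r 1 1)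
      + (\<Sum>t\<le>l. \<Sum>r<n. (d 1 t 1 - p 1 t 1) * p i (l - t) r * p r 1 1)"
    by (simp add: sum_subtractf sum.distrib algebra_simps)
  then show ?thesis unfolding sum_d_defect sum_defect_1_t .
qed

text \<open>Identity (2) minus identity (1): by \<open>lower\<close>, only terms with \<open>d i l 1 - p i l 1\<close>
  and, for \<open>i = 1\<close>, two defects of the same total degree survive.\<close>

lemma degree_1_defect:
  "of_nat (i + l - 1) * p 1 1 1 * (d i l 1 - p i l 1) =
    (if i = 1 then p 1 1 1 * ((d l 1 1 - p l 1 1) + (d 1 l 1 - p 1 l 1)) else 0)"
proof -
  have "(\<Sum>s\<le>1. bil n p (p i s) (d l (1 - s)) 1) = (\<Sum>t\<le>l. bil n p (p i (l - t)) (p 1 t) 1)"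
    by (rule cycle1) (use i_less l_less P.two_le_n in auto)
  moreover have "(\<Sum>s\<le>1. bil n d (p i s) (p l (1 - s)) 1) = (\<Sum>t\<le>l. bil n p (d i (l - t)) (d 1 t) 1)"
    by (rule cycle2[OF i_less l_less])
  ultimately have "of_nat l * p 1 1 1 * (d i l 1 - p i l 1)
      - (if i = 1 then p 1 1 1 * (d l 1 1 - p l 1 1) else 0) + of_nat i * p 1 1 1 * (d i l 1 - p i l 1)
      = p 1 1 1 * (d i l 1 - p i l 1) + (if i = 1 then p 1 1 1 * (d 1 l 1 - p 1 l 1) else 0)"
    (is "?lhs = ?rhs")
    using cycle_lhs_difference cycle_rhs_difference by simp
  have ij: "of_nat (i + l - 1) = (of_nat i + of_nat l - 1 :: 'a)" using i_pos by (simp add: of_nat_diff)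
  have "of_nat (i + l - 1) * p 1 1 1 * (d i l 1 - p i l 1) -
      (if i = 1 then p 1 1 1 * ((d l 1 1 - p l 1 1) + (d 1 l 1 - p 1 l 1)) else 0) = ?lhs - ?rhs"
    unfolding ij by (cases "i = 1") (simp_all add: algebra_simps)
  then show ?thesis using \<open>?lhs = ?rhs\<close> by simp
qed

end

lemma degree_1_eq_if_lower:
  assumes lower: "\<And>x y. x + y < a + b \<Longrightarrow> d x y 1 = p x y 1"
  shows "d a b 1 = p a b 1"
proof -
  have trivial: "d x y 1 = p x y 1" if "x = 0 \<or> y = 0 \<or> n \<le> x \<or> n \<le> y" for x y
    using that p_first_var d_first_var p_second_var d_second_var
      P.coeff_eq_0_outside D.coeff_eq_0_outside
    by auto
  have defect: "of_nat (x + y - 1) * p 1 1 1 * (d x y 1 - p x y 1) =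
      (if x = 1 then p 1 1 1 * ((d y 1 1 - p y 1 1) + (d 1 y 1 - p 1 y 1)) else 0)"
    if "x + y = a + b" "1 \<le> x" "x < n" "1 \<le> y" "y < n" for x y
    by (rule degree_1_defect) (use lower that in auto)
  have not_1: "d x y 1 = p x y 1" if "x + y = a + b" "x \<noteq> 1" for x y
  proof (cases "x = 0 \<or> y = 0 \<or> n \<le> x \<or> n \<le> y")
    case False
    then have "of_nat (x + y - 1) * p 1 1 1 * (d x y 1 - p x y 1) = 0"
      using defect[OF that(1)] that(2) by simp
    then show ?thesis using p_111 False by simp
  qed (rule trivial)
  show ?thesis
  proof (cases "a = 1 \<and> \<not> (b = 0 \<or> n \<le> b)")
    case True
    then have "of_nat b * p 1 1 1 * (d 1 b 1 - p 1 b 1) =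
        p 1 1 1 * ((d b 1 1 - p b 1 1) + (d 1 b 1 - p 1 b 1))"
      using defect[of 1 b] P.two_le_n by simp
    moreover have "b \<noteq> 1 \<Longrightarrow> d b 1 1 = p b 1 1" using not_1[of b 1] True by simp
    ultimately have "(of_nat b - (if b = 1 then 2 else 1)) * p 1 1 1 * (d 1 b 1 - p 1 b 1) = 0"
      by (cases "b = 1") (simp_all add: algebra_simps)
    then show ?thesis using True p_111 by (cases "b = 1") simp_all
  next
    case False
    then show ?thesis using not_1 trivial by blast
  qed
qed

lemma degree_1_eq: "d a b 1 = p a b 1"
proof -
  have "\<forall>a b. a + b = m \<longrightarrow> d a b 1 = p a b 1" for m
  proof (induction m rule: less_induct)
    case (less m)
    show ?case
    proof (intro allI impI)
      fix a b assume "a + b = m"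
      show "d a b 1 = p a b 1" by (rule degree_1_eq_if_lower) (use less \<open>a + b = m\<close> in blast)
    qed
  qed
  then show ?thesis by blast
qed

lemma d_eq_p: "d = p"
  using eq_if_degree_1_eq degree_1_eq by blast

lemma p_second_1_recursion:
  assumes "1 < j" "j < n"
  shows "p j 1 1 * p 1 1 1 = p 1 1 1 * (\<Sum>a<j. p 1 a 1 * p 1 (j - a) 1)
            - (\<Sum>l\<in>{2..j}. of_nat l * p (j - l + 1) 1 1 * p 1 l 1)"
  by (rule P.coeff_second_1_recursion) (use cycle1[of 1 j 1] d_eq_p assms in simp_all)

lemma p_degree_1_recursion:
  assumes "1 < i" "i < n" "1 < j" "j < n"
  shows "of_nat (i + j - 1) * p 1 1 1 * p i j 1 =
            (\<Sum>a\<le>j. \<Sum>h\<in>{1..i}. if (a, h) = (j, 1) then 0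
                                    else p i a h * p 1 (j - a) 1 * p h 1 1)
            - (\<Sum>c\<le>1. \<Sum>h\<in>{1..i}. \<Sum>l\<in>{1..j}. if (h, l) = (i, j) then 0
                                    else p i c h * p j (1 - c) l * p h l 1)"
  by (rule P.coeff_degree_1_recursion) (use cycle1[of i j 1] d_eq_p assms in simp_all)

end

lemma q_cycle_pair_if_regular_q_cycle:
  fixes p d :: "nat \<Rightarrow> nat \<Rightarrow> nat \<Rightarrow> 'a::field_char_0"
  assumes n: "2 \<le> n" and cycle: "regular_q_cycle n p d" and "p 1 1 1 \<noteq> 0"
  shows "q_cycle_pair n p d"
proof -
  have one: "1 < n" using n by simp
  have magma: "regular_q_magma n p d" using cycle unfolding regular_q_cycle_def by blast
  then have maps: "lin_coeffs n p" "lin_coeffs n d" "coalg_morph n p" "coalg_morph n d"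
    unfolding regular_q_magma_def by blast+
  obtain L R where "coalg_map n L" "coalg_map n R" and inverse: "\<forall>i<n. \<forall>j<n. \<forall>k<n.
           (\<Sum>s\<le>j. \<Sum>r<n. L i s r * p r (j - s) k) = (if j = 0 \<and> k = i then 1 else 0) \<and>
           (\<Sum>s\<le>j. \<Sum>r<n. p i s r * L r (j - s) k) = (if j = 0 \<and> k = i then 1 else 0) \<and>
           (\<Sum>s\<le>j. \<Sum>r<n. d i (j - s) r * R r s k) = (if j = 0 \<and> k = i then 1 else 0) \<and>
           (\<Sum>s\<le>j. \<Sum>r<n. R i (j - s) r * d r s k) = (if j = 0 \<and> k = i then 1 else 0)"
    using magma n unfolding regular_q_magma_def coalg_map_def by blast
  interpret L: coalg_map n L by fact
  interpret R: coalg_map n R by fact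
  have "(\<Sum>s\<le>0. \<Sum>r<n. L 1 s r * p r (0 - s) 1) = (if (0::nat) = 0 \<and> (1::nat) = 1 then 1 else 0)"
    "(\<Sum>s\<le>0. \<Sum>r<n. R 1 (0 - s) r * d r s 1) = (if (0::nat) = 0 \<and> (1::nat) = 1 then 1 else 0)"
    using inverse one by blast+
  then have "L 1 0 1 * p 1 0 1 = 1" "R 1 0 1 * d 1 0 1 = 1"
    using L.sum_row_1_0[of "\<lambda>r. p r 0 1"] R.sum_row_1_0[of "\<lambda>r. d r 0 1"] by simp_all
  then have units: "p 1 0 1 \<noteq> 0" "d 1 0 1 \<noteq> 0" by auto
  have identities: "\<forall>i<n. \<forall>j<n. \<forall>l<n. \<forall>k<n.
        (\<Sum>s\<le>j. bil n p (p i s) (d l (j - s)) k) = (\<Sum>t\<le>l. bil n p (p i (l - t)) (p j t) k) \<and>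
        (\<Sum>s\<le>j. bil n d (p i s) (p l (j - s)) k) = (\<Sum>t\<le>l. bil n p (d i (l - t)) (d j t) k) \<and>
        (\<Sum>s\<le>j. bil n d (d i s) (d l (j - s)) k) = (\<Sum>t\<le>l. bil n d (d i (l - t)) (p j t) k)"
    using cycle unfolding regular_q_cycle_def by blast
  have "(\<Sum>s\<le>j. bil n p (p i s) (d l (j - s)) 1) = (\<Sum>t\<le>l. bil n p (p i (l - t)) (p j t) 1)"
    if "i < n" "j < n" "l < n" for i j l
    using identities that one by blast
  moreover have "(\<Sum>s\<le>1. bil n d (p i s) (p l (1 - s)) 1) = (\<Sum>t\<le>l. bil n p (d i (l - t)) (d 1 t) 1)"
    if "i < n" "l < n" for i l
    using identities that one by blast
  ultimately show ?thesis
    by unfold_locales (use maps n units \<open>p 1 1 1 \<noteq> 0\<close> in auto)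
qed

theorem proposition4p5:
  fixes n :: nat and p d :: "nat \<Rightarrow> nat \<Rightarrow> nat \<Rightarrow> 'a::field_char_0"
  assumes "alg_closed TYPE('a)"
    and "2 \<le> n"
    and "regular_q_cycle n p d"
    and "p 1 1 1 \<noteq> 0"
  shows "d = p
    \<and> (\<forall>j<n. p j 0 1 = (if j = 1 then 1 else 0))
    \<and> (\<forall>j. 1 < j \<and> j < n \<longrightarrow>
          p j 1 1 * p 1 1 1 =
            p 1 1 1 * (\<Sum>a<j. p 1 a 1 * p 1 (j - a) 1)
            - (\<Sum>l\<in>{2..j}. of_nat l * p (j - l + 1) 1 1 * p 1 l 1))
    \<and> (\<forall>i j. 1 < i \<and> i < n \<and> 1 < j \<and> j < n \<longrightarrow>
          of_nat (i + j - 1) * p 1 1 1 * p i j 1 =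
            (\<Sum>a\<le>j. \<Sum>h\<in>{1..i}. if (a, h) = (j, 1) then 0
                                    else p i a h * p 1 (j - a) 1 * p h 1 1)
            - (\<Sum>c\<le>1. \<Sum>h\<in>{1..i}. \<Sum>l\<in>{1..j}. if (h, l) = (i, j) then 0
                                    else p i c h * p j (1 - c) l * p h l 1))
    \<and> (\<forall>j k l. j < n \<and> k < n \<and> 1 < l \<and> l < n \<longrightarrow>
          p j k l = (\<Sum>j1\<le>j. \<Sum>k1\<le>k.
                       if 1 \<le> j1 + k1 \<and> l - 1 \<le> (j - j1) + (k - k1)
                       then p j1 k1 1 * p (j - j1) (k - k1) (l - 1) else 0))"
proof -
  interpret q_cycle_pair n p d
    using q_cycle_pair_if_regular_q_cycle assms(2-4) .
  show ?thesis
    by (intro conjI)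
      (use d_eq_p p_second_var p_second_1_recursion p_degree_1_recursion
        P.coeff_higher_degree_recursion in blast)+
qed

end
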